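(* Let $\mathbf A=(\mathbf a_1,\ldots,\mathbf a_m)^\top\in\mathbb C^{m\times d}$ and $\mathbf b=(b_1,\ldots,b_m)^\top\in\mathbb C^m$. Then the following are equivalent: (A) $(\mathbf A,\mathbf b)$ is affine phase retrievable for $\mathbb C^d$. (B) The map $\mathbf M^2_{\mathbf A,\mathbf b}$ is injective on $\mathbb C^d$. (C) For any $\mathbf u,\mathbf v\in\mathbb C^d$ with $\mathbf u\neq0$, there exists $1\le k\le m$ such that $\mathrm{Re}\big(\langle\mathbf u,\mathbf a_k\rangle(\langle\mathbf a_k,\mathbf v\rangle+b_k)\big)\neq 0$. (D) Viewing $\mathbf M^2_{\mathbf A,\mathbf b}$ as a map $\mathbb R^{2d}\to\mathbb R^m$ (via $\mathbf x=\mathbf x_R+i\mathbf x_I\leftrightarrow(\mathbf x_R,\mathbf x_I)$), its real Jacobian $J(\mathbf x)$ has rank $2d$ for all $\mathbf x\in\mathbb R^{2d}$.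
   Context: For $\mathbf u,\mathbf v\in\mathbb C^d$, $\langle\mathbf u,\mathbf v\rangle=\sum_i\overline{u_i}v_i$. Define $\mathbf M_{\mathbf A,\mathbf b}(\mathbf x)=(|\langle\mathbf a_1,\mathbf x\rangle+b_1|,\ldots,|\langle\mathbf a_m,\mathbf x\rangle+b_m|)$ and $\mathbf M^2_{\mathbf A,\mathbf b}(\mathbf x)=(|\langle\mathbf a_1,\mathbf x\rangle+b_1|^2,\ldots,|\langle\mathbf a_m,\mathbf x\rangle+b_m|^2)$. $(\mathbf A,\mathbf b)$ is called affine phase retrievable for $\mathbb C^d$ if $\mathbf M_{\mathbf A,\mathbf b}$ is injective on $\mathbb C^d$. *)

theory Defs
  imports "HOL-Analysis.Analysis"
begin

definition cinner :: "complex ^ 'd \<Rightarrow> complex ^ 'd \<Rightarrow> complex" where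
  "cinner u v = (\<Sum>i\<in>UNIV. cnj (u $ i) * v $ i)"

text \<open>Rows of A are the measurement vectors a_k = A $ k.\<close>
definition M_map :: "complex ^ 'd ^ 'm \<Rightarrow> complex ^ 'm \<Rightarrow> complex ^ 'd \<Rightarrow> real ^ 'm" where
  "M_map A b x = (\<chi> k. cmod (cinner (A $ k) x + b $ k))"

definition M2_map :: "complex ^ 'd ^ 'm \<Rightarrow> complex ^ 'm \<Rightarrow> complex ^ 'd \<Rightarrow> real ^ 'm" where
  "M2_map A b x = (\<chi> k. (cmod (cinner (A $ k) x + b $ k))\<^sup>2)"

definition affine_phase_retrievable :: "complex ^ 'd ^ 'm \<Rightarrow> complex ^ 'm \<Rightarrow> bool" where
  "affine_phase_retrievable A b \<longleftrightarrow> inj (M_map A b)"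

text \<open>Identification R^{2d} = real^('d + 'd) with C^d: x = x_R + i x_I, x_R = Inl part, x_I = Inr part.\<close>
definition real_to_cvec :: "real ^ ('d + 'd) \<Rightarrow> complex ^ 'd" where
  "real_to_cvec y = (\<chi> i. Complex (y $ Inl i) (y $ Inr i))"

definition M2_real :: "complex ^ 'd ^ 'm \<Rightarrow> complex ^ 'm \<Rightarrow> real ^ ('d + 'd) \<Rightarrow> real ^ 'm" where
  "M2_real A b y = M2_map A b (real_to_cvec y)"

end

theory Submission
  imports Defs "HOL-Library.Cardinality"
begin

text \<open>
  Everything rests on the polarization identity
  \<open>|p + q|\<^sup>2 - |p - q|\<^sup>2 = 4 Re (q\<^sup>* p)\<close>. Applied to \<open>p = \<langle>a\<^sub>k, v\<rangle> + b\<^sub>k\<close>, \<open>q = \<langle>a\<^sub>k, u\<rangle>\<close>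
  it says that \<open>M\<^sup>2(v + u) - M\<^sup>2(v - u)\<close> is \<open>4 Re (\<langle>u, a\<^sub>k\<rangle> (\<langle>a\<^sub>k, v\<rangle> + b\<^sub>k))\<close>
  componentwise. Since every pair \<open>x \<noteq> y\<close> is of the form \<open>v \<pm> u\<close> with \<open>u \<noteq> 0\<close>,
  injectivity of \<open>M\<^sup>2\<close> is condition (C). The same expression, as a function of
  \<open>u\<close>, is half the real derivative of \<open>M\<^sup>2\<close> at \<open>v\<close>, so (C) also says that
  this derivative has trivial kernel everywhere, i.e. that the Jacobian has full rank.
\<close>

definition affine_PR_condition :: "complex ^ 'd ^ 'm \<Rightarrow> complex ^ 'm \<Rightarrow> bool" where
  "affine_PR_condition A b \<longleftrightarrow>
     (\<forall>u v. u \<noteq> 0 \<longrightarrow> (\<exists>k. Re (cinner u (A $ k) * (cinner (A $ k) v + b $ k)) \<noteq> 0))"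

lemma cinner_add_right: "cinner a (x + y) = cinner a x + cinner a y"
  by (simp add: cinner_def sum.distrib algebra_simps)

lemma cinner_diff_right: "cinner a (x - y) = cinner a x - cinner a y"
  by (simp add: cinner_def sum_subtractf algebra_simps)

lemma cinner_scaleR_right: "cinner a (c *\<^sub>R x) = c *\<^sub>R cinner a x"
  unfolding cinner_def vector_scaleR_component
  by (simp add: scaleR_conv_of_real sum_distrib_left algebra_simps)

lemma cinner_commute_cnj: "cinner u a = cnj (cinner a u)"
  by (simp add: cinner_def mult.commute)

lemma cmod_add_power2_minus_cmod_diff_power2:
  fixes p q :: complex
  shows "(cmod (p + q))\<^sup>2 - (cmod (p - q))\<^sup>2 = 4 * Re (cnj q * p)"
  unfolding cmod_power2 by (simp add: power2_eq_square algebra_simps)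

lemma M2_map_add_minus_M2_map_diff:
  "M2_map A b (v + u) $ k - M2_map A b (v - u) $ k
     = 4 * Re (cinner u (A $ k) * (cinner (A $ k) v + b $ k))"
proof -
  have "cinner (A $ k) (v + u) + b $ k = (cinner (A $ k) v + b $ k) + cinner (A $ k) u"
    and "cinner (A $ k) (v - u) + b $ k = (cinner (A $ k) v + b $ k) - cinner (A $ k) u"
    by (simp_all add: cinner_add_right cinner_diff_right)
  then show ?thesis
    by (simp only: M2_map_def vec_lambda_beta cmod_add_power2_minus_cmod_diff_power2
        cinner_commute_cnj[of u])
qed

lemma M2_map_eq_iff_M_map_eq: "M2_map A b x = M2_map A b y \<longleftrightarrow> M_map A b x = M_map A b y"
  by (simp add: M2_map_def M_map_def vec_eq_iff power2_eq_iff_nonneg)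

lemma affine_phase_retrievable_iff_inj_M2_map:
  "affine_phase_retrievable A b \<longleftrightarrow> inj (M2_map A b)"
  unfolding affine_phase_retrievable_def inj_def by (simp only: M2_map_eq_iff_M_map_eq)

lemma inj_iff_add_neq_diff:
  fixes f :: "'a::real_vector \<Rightarrow> 'b"
  shows "inj f \<longleftrightarrow> (\<forall>u v. u \<noteq> 0 \<longrightarrow> f (v + u) \<noteq> f (v - u))"
proof
  assume "inj f"
  moreover have "v + u \<noteq> v - u" if "u \<noteq> 0" for u v :: 'a
  proof
    assume "v + u = v - u"
    then have "(2::real) *\<^sub>R u = 0"
      by (simp add: scaleR_2 algebra_simps)
    with \<open>u \<noteq> 0\<close> show False
      by simp
  qed
  ultimately show "\<forall>u v. u \<noteq> 0 \<longrightarrow> f (v + u) \<noteq> f (v - u)"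
    by (auto dest: injD)
next
  assume sep: "\<forall>u v. u \<noteq> 0 \<longrightarrow> f (v + u) \<noteq> f (v - u)"
  show "inj f"
  proof (rule injI)
    fix x y assume "f x = f y"
    define v where "v = (1/2::real) *\<^sub>R (x + y)"
    define u where "u = (1/2::real) *\<^sub>R (x - y)"
    have "x = v + u" "y = v - u"
      unfolding u_def v_def by (simp_all add: algebra_simps flip: scaleR_2)
    with \<open>f x = f y\<close> sep have "u = 0" by metis
    then show "x = y" unfolding u_def by simp
  qed
qed

lemma inj_M2_map_iff_affine_PR_condition:
  "inj (M2_map A b) \<longleftrightarrow> affine_PR_condition A b"
proof -
  have "M2_map A b (v + u) \<noteq> M2_map A b (v - u) \<longleftrightarrow>
        (\<exists>k. M2_map A b (v + u) $ k - M2_map A b (v - u) $ k \<noteq> 0)" for u v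
    by (simp add: vec_eq_iff)
  then have "M2_map A b (v + u) \<noteq> M2_map A b (v - u) \<longleftrightarrow>
        (\<exists>k. Re (cinner u (A $ k) * (cinner (A $ k) v + b $ k)) \<noteq> 0)" for u v
    by (simp only: M2_map_add_minus_M2_map_diff) simp
  then show ?thesis
    unfolding inj_iff_add_neq_diff affine_PR_condition_def by simp
qed

lemma linear_real_to_cvec: "linear real_to_cvec"
  by (rule linearI) (simp_all add: real_to_cvec_def vec_eq_iff complex_eq_iff)

lemma surj_real_to_cvec: "surj real_to_cvec"
proof (rule surjI)
  show "real_to_cvec (\<chi> j. case j of Inl i \<Rightarrow> Re (u $ i) | Inr i \<Rightarrow> Im (u $ i)) = u" for u
    by (simp add: real_to_cvec_def vec_eq_iff)
qed

lemma real_to_cvec_eq_0_iff: "real_to_cvec h = 0 \<longleftrightarrow> h = 0"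
proof
  assume "real_to_cvec h = 0"
  then have "h $ Inl i = 0 \<and> h $ Inr i = 0" for i
    by (simp add: real_to_cvec_def vec_eq_iff complex_eq_iff)
  then show "h = 0"
    by (metis vec_eq_iff zero_index sum.exhaust)
qed (simp add: linear_0[OF linear_real_to_cvec])

lemma card_UNIV_sum_self: "CARD('a::finite + 'a) = 2 * CARD('a)"
  by (simp add: card_UNIV_sum mult_2)

lemma has_derivative_vec_componentwise:
  fixes f f' :: "'a::real_normed_vector \<Rightarrow> real ^ 'n"
  assumes "\<And>k. ((\<lambda>x. f x $ k) has_derivative (\<lambda>h. f' h $ k)) (at x within S)"
  shows "(f has_derivative f') (at x within S)"
proof (subst has_derivative_componentwise_within, intro ballI)
  fix i :: "real ^ 'n" assume "i \<in> Basis"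
  then obtain k where "i = axis k 1" by (auto simp: Basis_vec_def)
  then show "((\<lambda>x. f x \<bullet> i) has_derivative (\<lambda>h. f' h \<bullet> i)) (at x within S)"
    using assms by (simp add: inner_axis)
qed

lemma has_derivative_M2_real_component:
  "((\<lambda>y. M2_real A b y $ k) has_derivative
     (\<lambda>h. 2 * Re (cinner (real_to_cvec h) (A $ k) * (cinner (A $ k) (real_to_cvec y) + b $ k))))
   (at y)"
proof -
  define L where "L h = cinner (A $ k) (real_to_cvec h)" for h
  have "linear L"
    unfolding L_def
    by (rule linearI) (simp_all add: linear_add[OF linear_real_to_cvec]
        linear_scale[OF linear_real_to_cvec] cinner_add_right cinner_scaleR_right)
  then have "(L has_derivative L) (at y)"
    by (simp add: linear_conv_bounded_linear bounded_linear_imp_has_derivative)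
  then have "((\<lambda>y. L y + b $ k) has_derivative (\<lambda>h. L h + 0)) (at y)"
    by (rule has_derivative_add[OF _ has_derivative_const])
  then have "((\<lambda>y. L y + b $ k) has_derivative L) (at y)"
    by (simp only: add.right_neutral)
  from this this have "((\<lambda>y. (L y + b $ k) \<bullet> (L y + b $ k)) has_derivative
               (\<lambda>h. (L y + b $ k) \<bullet> L h + L h \<bullet> (L y + b $ k))) (at y)"
    by (rule has_derivative_inner)
  moreover have "(\<lambda>y. M2_real A b y $ k) = (\<lambda>y. (L y + b $ k) \<bullet> (L y + b $ k))"
    by (simp add: M2_real_def M2_map_def L_def power2_norm_eq_inner)
  moreover have "(L y + b $ k) \<bullet> L h + L h \<bullet> (L y + b $ k)
      = 2 * Re (cinner (real_to_cvec h) (A $ k) * (cinner (A $ k) (real_to_cvec y) + b $ k))" for h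
    by (simp add: L_def cinner_commute_cnj[of "real_to_cvec h"] inner_complex_def)
  ultimately show ?thesis
    by simp
qed

lemma has_derivative_M2_real:
  "(M2_real A b has_derivative
     (\<lambda>h. \<chi> k. 2 * Re (cinner (real_to_cvec h) (A $ k) * (cinner (A $ k) (real_to_cvec y) + b $ k))))
   (at y)"
  by (rule has_derivative_vec_componentwise) (simp only: vec_lambda_beta has_derivative_M2_real_component)

lemma rank_jacobian_eq_card_iff:
  fixes f :: "real ^ 'n \<Rightarrow> real ^ 'm"
  assumes "(f has_derivative f') (at x)"
  shows "rank (jacobian f (at x)) = CARD('n) \<longleftrightarrow> (\<forall>h. f' h = 0 \<longrightarrow> h = 0)"
proof -
  have "f differentiable at x"
    using assms by (rule differentiableI)
  then have "(f has_derivative (*v) (jacobian f (at x))) (at x)"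
    by (simp only: jacobian_works)
  then have "(*v) (jacobian f (at x)) = f'"
    using assms by (rule has_derivative_unique)
  then show ?thesis
    using full_rank_injective linear_injective_0[OF has_derivative_linear[OF assms]] by metis
qed

lemma affine_PR_condition_iff_real_coordinates:
  "affine_PR_condition A b \<longleftrightarrow>
     (\<forall>h y :: real ^ ('d::finite + 'd). h \<noteq> 0 \<longrightarrow>
       (\<exists>k. Re (cinner (real_to_cvec h) (A $ k) * (cinner (A $ k) (real_to_cvec y) + b $ k)) \<noteq> 0))"
    (is "_ \<longleftrightarrow> (\<forall>h y. h \<noteq> 0 \<longrightarrow> ?P (real_to_cvec h) (real_to_cvec y))")
proof
  assume "affine_PR_condition A b"
  then show "\<forall>h y. h \<noteq> 0 \<longrightarrow> ?P (real_to_cvec h) (real_to_cvec y)"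
    by (simp add: affine_PR_condition_def real_to_cvec_eq_0_iff)
next
  assume lifted: "\<forall>h y. h \<noteq> 0 \<longrightarrow> ?P (real_to_cvec h) (real_to_cvec y)"
  show "affine_PR_condition A b"
    unfolding affine_PR_condition_def
  proof (intro allI impI)
    fix u v :: "complex ^ 'd" assume "u \<noteq> 0"
    obtain h y where "u = real_to_cvec h" "v = real_to_cvec y"
      using surj_real_to_cvec by (metis surjD)
    with \<open>u \<noteq> 0\<close> lifted show "?P u v"
      by (auto simp: real_to_cvec_eq_0_iff)
  qed
qed

lemma affine_PR_condition_iff_rank_jacobian:
  "affine_PR_condition A b \<longleftrightarrow>
     (\<forall>y :: real ^ ('d::finite + 'd). rank (jacobian (M2_real A b) (at y)) = 2 * CARD('d))"
proof -
  have D_eq_0: "(\<chi> k. 2 * Re (cinner (real_to_cvec h) (A $ k) * (cinner (A $ k) (real_to_cvec y) + b $ k))) = 0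
      \<longleftrightarrow> (\<forall>k. Re (cinner (real_to_cvec h) (A $ k) * (cinner (A $ k) (real_to_cvec y) + b $ k)) = 0)"
    for h y :: "real ^ ('d + 'd)"
    by (simp add: vec_eq_iff)
  show ?thesis
    unfolding affine_PR_condition_iff_real_coordinates card_UNIV_sum_self[symmetric]
      rank_jacobian_eq_card_iff[OF has_derivative_M2_real] D_eq_0
    by blast
qed

theorem theorem3p1:
  fixes A :: "complex ^ 'd ^ 'm" and b :: "complex ^ 'm"
  shows "(affine_phase_retrievable A b \<longleftrightarrow> inj (M2_map A b))
       \<and> (inj (M2_map A b) \<longleftrightarrow>
           (\<forall>u v :: complex ^ 'd. u \<noteq> 0 \<longrightarrow>
              (\<exists>k. Re (cinner u (A $ k) * (cinner (A $ k) v + b $ k)) \<noteq> 0)))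
       \<and> ((\<forall>u v :: complex ^ 'd. u \<noteq> 0 \<longrightarrow>
              (\<exists>k. Re (cinner u (A $ k) * (cinner (A $ k) v + b $ k)) \<noteq> 0))
           \<longleftrightarrow> (\<forall>y :: real ^ ('d + 'd). rank (jacobian (M2_real A b) (at y)) = 2 * CARD('d)))"
  using affine_phase_retrievable_iff_inj_M2_map[of A b] inj_M2_map_iff_affine_PR_condition[of A b]
    affine_PR_condition_iff_rank_jacobian[of A b]
  unfolding affine_PR_condition_def by blast

end
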